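(* Assume Hypotheses (H1) and (H2) below. There are constants $\eta,C,L_0>0$ such that the following holds for each $L\geq L_0$. Fix $\lambda\in\bar\Omega$. Then, successively for $j=1,\ldots,r$, the linear boundary-value problem \begin{align*} &V_x=(A(x,\lambda)-\nu^+_j(\lambda)\mathbb{I})V \quad\text{on } 0<x<L,\\ &\langle V^+_{L,k}(0,\lambda),V(0)\rangle=0 \quad\text{for } k=1,\ldots,j-1,\\ &\langle W^+_j(\lambda),V(L)\rangle=\langle W^+_j(\lambda),V^+_j(\lambda)\rangle,\\ &\langle W^+_k(\lambda),V(L)\rangle=0 \quad\text{for } k=j+1,\ldots,n, \end{align*} where $V^+_{L,k}(\cdot,\lambda)$, $k<j$, denote the solutions obtained at the previous steps, has a unique solution $V(x)=V^+_{L,j}(x,\lambda)$ for $x\in[0,L]$.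
   Context: Consider the linear system $U_x=A(x,\lambda)U$, $U\in\mathbb{C}^n$, $x\in\mathbb{R}$. (H1): There are an open, bounded, simply connected set $\Omega\subset\mathbb{C}$, a continuous map $A:\mathbb{R}\times\bar\Omega\to\mathbb{C}^{n\times n}$ and continuous maps $A_\pm:\bar\Omega\to\mathbb{C}^{n\times n}$ such that (i) $A(x,\lambda)$ and $A_\pm(\lambda)$ are analytic in $\lambda\in\Omega$; (ii) $A(x,\lambda)\to A_\pm(\lambda)$ exponentially as $x\to\pm\infty$; (iii) $A_\pm(\lambda)$ are hyperbolic for $\lambda\in\bar\Omega$ and each has exactly $r$ eigenvalues, counted with multiplicity, with negative real part. (H2): The eigenvalues of $A_\pm(\lambda)$ are simple for all $\lambda\in\bar\Omega$. Notation: $\langle U,V\rangle:=U^*V$ where ${}^*$ is the conjugate transpose; $\mathbb{I}$ is the identity matrix. Let $\nu^+_1(\lambda),\ldots,\nu^+_n(\lambda)$ be the eigenvalues of $A_+(\lambda)$, ordered by increasing real part (so $\mathrm{Re}\,\nu^+_j(\lambda)<0$ iff $j\le r$) and varying continuously in $\lambda\in\bar\Omega$; $V^+_j(\lambda)$ are eigenvectors of $A_+(\lambda)$ for $\nu^+_j(\lambda)$ and $W^+_j(\lambda)$ are eigenvectors of $A_+(\lambda)^*$ for $\overline{\nu^+_j(\lambda)}$, chosen to vary continuously in $\lambda\in\bar\Omega$. *)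

theory Defs
  imports "HOL-Analysis.Analysis"
begin

definition cinner :: "complex^'n \<Rightarrow> complex^'n \<Rightarrow> complex" where
  "cinner U V = (\<Sum>i\<in>UNIV. cnj (U$i) * V$i)"

definition cadj :: "complex^'n^'n \<Rightarrow> complex^'n^'n" where
  "cadj M = (\<chi> i j. cnj (M$j$i))"

text \<open>Indices of eigenvalues run over \<open>1..n\<close>, \<open>n = CARD('n)\<close>.\<close>
definition bvp_sol ::
  "(real \<Rightarrow> complex \<Rightarrow> complex^'n^'n) \<Rightarrow> (nat \<Rightarrow> complex \<Rightarrow> complex)
   \<Rightarrow> (nat \<Rightarrow> complex \<Rightarrow> complex^'n) \<Rightarrow> (nat \<Rightarrow> complex \<Rightarrow> complex^'n)
   \<Rightarrow> complex \<Rightarrow> real \<Rightarrow> nat \<Rightarrow> (nat \<Rightarrow> real \<Rightarrow> complex^'n) \<Rightarrow> (real \<Rightarrow> complex^'n) \<Rightarrow> bool"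
where
  "bvp_sol A nu Vp Wp lam L j Vprev V \<longleftrightarrow>
     continuous_on {0..L} V \<and>
     (\<forall>x\<in>{0<..<L}. (V has_vector_derivative (A x lam *v V x - nu j lam *s V x)) (at x)) \<and>
     (\<forall>k\<in>{1..<j}. cinner (Vprev k 0) (V 0) = 0) \<and>
     cinner (Wp j lam) (V L) = cinner (Wp j lam) (Vp j lam) \<and>
     (\<forall>k\<in>{j+1..CARD('n)}. cinner (Wp k lam) (V L) = 0)"

end

theory Submission
  imports Defs
begin

text \<open>A solution of \<open>U' = A(x,\<lambda>) U\<close> on \<open>[0,L]\<close> is determined by \<open>U(L)\<close>,
  and \<open>P : U(L) \<mapsto> U(0)\<close> is linear; the substitution \<open>V = exp (-\<nu>\<^sub>j (x - L)) U\<close> turns these into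
  the solutions of the \<open>j\<close>-th equation without changing the value at \<open>L\<close>. As the \<open>W\<^sub>k\<close> are
  biorthogonal to the \<open>V\<^sub>k\<close>, the conditions at \<open>L\<close> say that \<open>V(L) - V\<^sub>j \<in> E\<^sub>j = span {V\<^sub>k | k < j}\<close>,
  and the conditions at \<open>0\<close> say that \<open>P V(L)\<close> is orthogonal to the \<open>P\<close>-images of the earlier
  terminal values, which span \<open>P E\<^sub>j\<close>. So \<open>V(L)\<close> is \<open>V\<^sub>j\<close> corrected by one Gram-Schmidt step for
  the form \<open>\<langle>P \<cdot>, P \<cdot>\<rangle>\<close>: the correction exists, and it is unique because two solutions differ at
  \<open>L\<close> by an element of \<open>E\<^sub>j\<close> whose \<open>P\<close>-image is orthogonal to all of \<open>P E\<^sub>j\<close>. This works for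
  every \<open>L > 0\<close>.\<close>

section \<open>The pairing on \<open>\<complex>\<^sup>n\<close>\<close>

lemma cinner_add_right: "cinner u (v + w) = cinner u v + cinner u w"
  by (simp add: cinner_def distrib_left sum.distrib)

lemma cinner_diff_right: "cinner u (v - w) = cinner u v - cinner u w"
  by (simp add: cinner_def right_diff_distrib sum_subtractf)

lemma cinner_scale_right: "cinner u (c *s v) = c * cinner u v"
  by (simp add: cinner_def sum_distrib_left algebra_simps)

lemma cinner_add_left: "cinner (u + v) w = cinner u w + cinner v w"
  by (simp add: cinner_def distrib_right sum.distrib)

lemma cinner_scale_left: "cinner (c *s u) v = cnj c * cinner u v"
  by (simp add: cinner_def sum_distrib_left algebra_simps)

lemma cinner_zero_left [simp]: "cinner 0 u = 0"
  by (simp add: cinner_def)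

lemma cinner_zero_right [simp]: "cinner u 0 = 0"
  by (simp add: cinner_def)

lemma cinner_sum_right: "finite I \<Longrightarrow> cinner u (\<Sum>k\<in>I. f k) = (\<Sum>k\<in>I. cinner u (f k))"
  by (induction I rule: finite_induct) (auto simp: cinner_add_right)

lemma Re_cinner: "Re (cinner u v) = u \<bullet> v"
  by (simp add: cinner_def inner_vec_def inner_complex_def)

lemma cinner_self_eq_0: "cinner u u = 0 \<longleftrightarrow> u = 0"
proof
  assume "cinner u u = 0"
  then show "u = 0"
    using Re_cinner[of u u] by simp
qed simp

lemma cinner_matrix_vector_mult_right: "cinner w (M *v v) = cinner (cadj M *v w) v"
proof -
  have "cinner w (M *v v) = (\<Sum>i\<in>UNIV. \<Sum>j\<in>UNIV. cnj (w$i) * M$i$j * v$j)"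
    by (simp add: cinner_def matrix_vector_mult_def sum_distrib_left mult.assoc)
  also have "\<dots> = (\<Sum>j\<in>UNIV. \<Sum>i\<in>UNIV. cnj (w$i) * M$i$j * v$j)"
    by (rule sum.swap)
  also have "\<dots> = cinner (cadj M *v w) v"
    by (simp add: cinner_def cadj_def matrix_vector_mult_def sum_distrib_left sum_distrib_right
        mult.commute mult.left_commute)
  finally show ?thesis .
qed

lemma subspace_cinner_left_eq_0: "vec.subspace {x. cinner x z = 0}"
  by (auto simp: vec.subspace_def cinner_add_left cinner_scale_left)

lemma subspace_cinner_right_eq_0: "vec.subspace {x. cinner z x = 0}"
  by (auto simp: vec.subspace_def cinner_add_right cinner_scale_right)

lemma cinner_span_left_eq_0:
  assumes "\<And>g. g \<in> G \<Longrightarrow> cinner g z = 0" and "x \<in> vec.span G"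
  shows "cinner x z = 0"
  using vec.span_minimal[OF _ subspace_cinner_left_eq_0[of z]] assms by blast

lemma cinner_span_right_eq_0:
  assumes "\<And>g. g \<in> G \<Longrightarrow> cinner z g = 0" and "x \<in> vec.span G"
  shows "cinner z x = 0"
  using vec.span_minimal[OF _ subspace_cinner_right_eq_0[of z]] assms by blast

text \<open>The complex span of \<open>G\<close> is the real span of \<open>G \<union> i G\<close>, so the real orthogonal
  decomposition of the library gives the complex one.\<close>
lemma cinner_orthogonal_projection_exists:
  fixes y :: "complex^'n"
  shows "\<exists>s\<in>vec.span G. \<forall>x\<in>vec.span G. cinner x (y - s) = 0"
proof -
  define R where "R = G \<union> (\<lambda>g. \<i> *s g) ` G"
  obtain s z where s: "s \<in> span R" and z: "\<And>x. x \<in> span R \<Longrightarrow> orthogonal z x"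
    and y: "y = s + z"
    using orthogonal_subspace_decomp_exists[of R y] by blast
  have "r *\<^sub>R x = (of_real r :: complex) *s x" for r and x :: "complex^'n"
    by (simp add: vec_eq_iff) (simp add: scaleR_conv_of_real)
  then have "subspace (vec.span G)"
    by (auto simp: subspace_def vec.span_zero vec.span_add vec.span_scale)
  moreover have "R \<subseteq> vec.span G"
    by (auto simp: R_def vec.span_base vec.span_scale)
  ultimately have "s \<in> vec.span G"
    using s span_minimal by blast
  moreover have "cinner g z = 0" if "g \<in> G" for g
  proof -
    have "Re (cinner g z) = 0" "Re (cinner (\<i> *s g) z) = 0"
      using z[of g] z[of "\<i> *s g"] that
      by (auto simp: R_def orthogonal_def inner_commute span_base Re_cinner)
    then show ?thesis
      by (simp add: cinner_scale_left complex_eq_iff)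
  qed
  ultimately show ?thesis
    using cinner_span_left_eq_0[of G z] y by (intro bexI[of _ s]) auto
qed

section \<open>Pulled-back Gram-Schmidt steps\<close>

lemma cinner_linear_correction_exists:
  fixes Q :: "complex^'n \<Rightarrow> complex^'n"
  assumes "Vector_Spaces.linear (*s) (*s) Q"
  shows "\<exists>t. t - v \<in> vec.span G \<and> (\<forall>e\<in>vec.span G. cinner (Q e) (Q t) = 0)"
proof -
  interpret Q: Vector_Spaces.linear "(*s)" "(*s)" Q by (fact assms)
  obtain s where s: "s \<in> vec.span (Q ` G)" and s_orth: "\<forall>x\<in>vec.span (Q ` G). cinner x (Q v - s) = 0"
    using cinner_orthogonal_projection_exists by blast
  then obtain c where c: "c \<in> vec.span G" "s = Q c"
    using Q.span_image by blast
  show ?thesis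
  proof (intro exI conjI ballI)
    show "v - c - v \<in> vec.span G"
      using c(1) by (simp add: vec.span_neg)
    fix e assume "e \<in> vec.span G"
    then have "Q e \<in> vec.span (Q ` G)"
      using Q.span_image by blast
    then show "cinner (Q e) (Q (v - c)) = 0"
      using s_orth c by (simp add: Q.diff)
  qed
qed

lemma span_eq_if_triangular:
  fixes v t :: "nat \<Rightarrow> 'a::field^'n"
  assumes "\<And>k. t k - v k \<in> vec.span (v ` {1..<k})"
  shows "vec.span (v ` {1..<j}) = vec.span (t ` {1..<j})"
proof -
  have "t k \<in> vec.span (v ` {1..<j})" if k: "k \<in> {1..<j}" for k
  proof -
    have "vec.span (v ` {1..<k}) \<subseteq> vec.span (v ` {1..<j})"
      using k by (intro vec.span_mono image_mono) auto
    then have "t k - v k \<in> vec.span (v ` {1..<j})"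
      using assms[of k] by (rule subsetD)
    moreover have "v k \<in> vec.span (v ` {1..<j})"
      using k by (intro vec.span_base) auto
    ultimately have "(t k - v k) + v k \<in> vec.span (v ` {1..<j})"
      by (rule vec.span_add)
    then show ?thesis
      by simp
  qed
  moreover have "v k \<in> vec.span (t ` {1..<j})" if "k \<in> {1..<j}" for k
    using that
  proof (induction k rule: less_induct)
    case (less k)
    then have "v ` {1..<k} \<subseteq> vec.span (t ` {1..<j})"
      by auto
    then have "vec.span (v ` {1..<k}) \<subseteq> vec.span (t ` {1..<j})"
      by (rule vec.span_minimal) simp
    then have "t k - v k \<in> vec.span (t ` {1..<j})"
      using assms[of k] by (rule subsetD)
    moreover have "t k \<in> vec.span (t ` {1..<j})"
      using less.prems by (intro vec.span_base) auto
    ultimately show ?case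
      using vec.span_diff[of "t k" _ "t k - v k"] by simp
  qed
  ultimately show ?thesis
    unfolding vec.span_eq by blast
qed

section \<open>Eigenvectors of a matrix and of its adjoint\<close>

lemma eigenvector_coefficients_eq_0:
  fixes M :: "complex^'n^'n"
  assumes "finite I" "inj_on mu I" "\<And>k. k \<in> I \<Longrightarrow> w k \<noteq> 0 \<and> M *v w k = mu k *s w k"
    and "(\<Sum>k\<in>I. c k *s w k) = 0" "k \<in> I"
  shows "c k = 0"
  using assms
proof (induction I arbitrary: c k rule: finite_induct)
  case empty
  then show ?case by simp
next
  case (insert a I)
  have eig: "\<And>k. k \<in> insert a I \<Longrightarrow> w k \<noteq> 0 \<and> M *v w k = mu k *s w k"
    using insert.prems by blast
  have sum0: "c a *s w a + (\<Sum>k\<in>I. c k *s w k) = 0"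
    using insert by simp
  text \<open>Applying \<open>M - mu a\<close> kills the \<open>a\<close>-term.\<close>
  have "M *v (c a *s w a + (\<Sum>k\<in>I. c k *s w k)) = (c a * mu a) *s w a + (\<Sum>k\<in>I. (c k * mu k) *s w k)"
    using eig insert.hyps(1)
    by (simp add: matrix_vector_right_distrib vec.sum vector_scalar_commute vector_smult_assoc)
  moreover have "mu a *s (c a *s w a + (\<Sum>k\<in>I. c k *s w k)) = (c a * mu a) *s w a + (\<Sum>k\<in>I. (c k * mu a) *s w k)"
    by (simp add: vec.scale_right_distrib vec.scale_sum_right mult.commute)
  ultimately have "(c a * mu a) *s w a + (\<Sum>k\<in>I. (c k * mu k) *s w k)
      = (c a * mu a) *s w a + (\<Sum>k\<in>I. (c k * mu a) *s w k)"
    using sum0 by simp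
  then have "(\<Sum>k\<in>I. (c k * (mu k - mu a)) *s w k) = 0"
    by (simp add: algebra_simps vec.scale_left_diff_distrib sum_subtractf)
  then have "c k * (mu k - mu a) = 0" if "k \<in> I" for k
    using insert.IH[of "\<lambda>k. c k * (mu k - mu a)" k] insert.prems insert.hyps that
    by (auto intro: inj_on_subset)
  moreover have "mu k \<noteq> mu a" if "k \<in> I" for k
    using insert.prems(1) insert.hyps(2) that by (metis inj_on_contraD insertCI)
  ultimately have "c k = 0" if "k \<in> I" for k
    using that by simp
  moreover have "c a = 0"
    using sum0 eig[of a] calculation by simp
  ultimately show ?case
    using insert.prems by auto
qed

locale eigenpairs =
  fixes M :: "complex^'n^'n" and \<mu> :: "nat \<Rightarrow> complex" and v w :: "nat \<Rightarrow> complex^'n"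
  assumes inj: "inj_on \<mu> {1..CARD('n)}"
    and right_eigenvector: "\<And>k. k \<in> {1..CARD('n)} \<Longrightarrow> v k \<noteq> 0 \<and> M *v v k = \<mu> k *s v k"
    and left_eigenvector: "\<And>k. k \<in> {1..CARD('n)} \<Longrightarrow> w k \<noteq> 0 \<and> cadj M *v w k = cnj (\<mu> k) *s w k"
begin

lemma cinner_left_right_eq_0:
  assumes "k \<in> {1..CARD('n)}" "m \<in> {1..CARD('n)}" "k \<noteq> m"
  shows "cinner (w k) (v m) = 0"
proof -
  have "\<mu> m * cinner (w k) (v m) = cinner (w k) (M *v v m)"
    using right_eigenvector assms by (simp add: cinner_scale_right)
  also have "\<dots> = \<mu> k * cinner (w k) (v m)"
    using left_eigenvector assms by (simp add: cinner_matrix_vector_mult_right cinner_scale_left)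
  finally have "(\<mu> m - \<mu> k) * cinner (w k) (v m) = 0"
    by (simp add: algebra_simps)
  moreover have "\<mu> m \<noteq> \<mu> k"
    using inj_onD[OF inj _ assms(2,1)] assms(3) by blast
  ultimately show ?thesis
    by simp
qed

lemma left_eigenvectors_span: "vec.span (w ` {1..CARD('n)}) = UNIV"
proof -
  have inj_cnj: "inj_on (\<lambda>k. cnj (\<mu> k)) {1..CARD('n)}"
    using inj by (rule comp_inj_on[of _ _ cnj, unfolded comp_def]) (simp add: inj_on_def)
  have inj_w: "inj_on w {1..CARD('n)}"
  proof (rule inj_onI)
    fix k m assume k: "k \<in> {1..CARD('n)}" and m: "m \<in> {1..CARD('n)}" and "w k = w m"
    then have "cnj (\<mu> k) *s w k = cnj (\<mu> m) *s w k"
      using left_eigenvector[OF k] left_eigenvector[OF m] by simp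
    then have "\<mu> k = \<mu> m"
      using left_eigenvector[OF k] by simp
    then show "k = m"
      using k m by (rule inj_onD[OF inj])
  qed
  have "vec.independent (w ` {1..CARD('n)})"
  proof (rule vec.independent_if_scalars_zero)
    fix f x assume f: "(\<Sum>x\<in>w ` {1..CARD('n)}. f x *s x) = 0" and "x \<in> w ` {1..CARD('n)}"
    then obtain k where k: "k \<in> {1..CARD('n)}" "x = w k"
      by blast
    have "(\<Sum>k\<in>{1..CARD('n)}. f (w k) *s w k) = 0"
      using f sum.reindex[OF inj_w, of "\<lambda>x. f x *s x"] by simp
    then show "f x = 0"
      using eigenvector_coefficients_eq_0[OF _ inj_cnj left_eigenvector, of "\<lambda>k. f (w k)"] k by simp
  qed simp
  moreover have "card (w ` {1..CARD('n)}) = vec.dim (UNIV :: (complex^'n) set)"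
    using card_image[OF inj_w] by (simp add: vec_dim_card card_cart_basis)
  ultimately have "UNIV \<subseteq> vec.span (w ` {1..CARD('n)})"
    using vec.card_eq_dim[of "w ` {1..CARD('n)}" UNIV] by simp
  then show ?thesis
    by blast
qed

lemma eq_0_if_cinner_left_eigenvectors_eq_0:
  assumes "\<And>k. k \<in> {1..CARD('n)} \<Longrightarrow> cinner (w k) d = 0"
  shows "d = 0"
proof -
  have "d \<in> vec.span (w ` {1..CARD('n)})"
    unfolding left_eigenvectors_span by (rule UNIV_I)
  then have "cinner d d = 0"
    by (rule cinner_span_left_eq_0[rotated]) (use assms in auto)
  then show ?thesis
    by (simp add: cinner_self_eq_0)
qed

lemma cinner_left_right_self_neq_0:
  assumes "k \<in> {1..CARD('n)}"
  shows "cinner (w k) (v k) \<noteq> 0"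
proof
  assume kk: "cinner (w k) (v k) = 0"
  have "v k = 0"
  proof (rule eq_0_if_cinner_left_eigenvectors_eq_0)
    fix m assume "m \<in> {1..CARD('n)}"
    then show "cinner (w m) (v k) = 0"
      using kk cinner_left_right_eq_0[of m k] assms by (cases "m = k") auto
  qed
  then show False
    using right_eigenvector assms by simp
qed

lemma in_span_right_iff_cinner_left_eq_0:
  assumes "j \<le> Suc CARD('n)"
  shows "d \<in> vec.span (v ` {1..<j}) \<longleftrightarrow> (\<forall>k\<in>{j..CARD('n)}. cinner (w k) d = 0)"
proof
  assume "d \<in> vec.span (v ` {1..<j})"
  moreover have "cinner (w k) g = 0" if "k \<in> {j..CARD('n)}" "g \<in> v ` {1..<j}" for k g
    using that cinner_left_right_eq_0 assms by auto
  ultimately show "\<forall>k\<in>{j..CARD('n)}. cinner (w k) d = 0"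
    using cinner_span_right_eq_0 by blast
next
  assume d: "\<forall>k\<in>{j..CARD('n)}. cinner (w k) d = 0"
  define e where "e = (\<Sum>k\<in>{1..<j}. (cinner (w k) d / cinner (w k) (v k)) *s v k)"
  have "d - e = 0"
  proof (rule eq_0_if_cinner_left_eigenvectors_eq_0)
    fix m assume m: "m \<in> {1..CARD('n)}"
    have "cinner (w m) e = (\<Sum>k\<in>{1..<j}. (cinner (w k) d / cinner (w k) (v k)) * cinner (w m) (v k))"
      by (simp add: e_def cinner_sum_right cinner_scale_right)
    also have "\<dots> = (\<Sum>k\<in>{1..<j}. if k = m then cinner (w m) d else 0)"
    proof (rule sum.cong)
      fix k assume "k \<in> {1..<j}"
      then have k: "k \<in> {1..CARD('n)}"
        using assms by auto
      show "cinner (w k) d / cinner (w k) (v k) * cinner (w m) (v k) = (if k = m then cinner (w m) d else 0)"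
        using cinner_left_right_self_neq_0[OF k] cinner_left_right_eq_0[OF m k] by auto
    qed simp
    also have "\<dots> = cinner (w m) d"
      using d m by (cases "m < j") (simp_all add: sum.delta')
    finally show "cinner (w m) (d - e) = 0"
      by (simp add: cinner_diff_right)
  qed
  moreover have "e \<in> vec.span (v ` {1..<j})"
    unfolding e_def by (intro vec.span_sum vec.span_scale vec.span_base) auto
  ultimately show "d \<in> vec.span (v ` {1..<j})"
    by simp
qed

lemma terminal_conditions_iff:
  assumes j: "j \<in> {1..CARD('n)}" and t: "t - v j \<in> vec.span (v ` {1..<j})"
  shows "cinner (w j) x = cinner (w j) (v j) \<and> (\<forall>k\<in>{j+1..CARD('n)}. cinner (w k) x = 0)
    \<longleftrightarrow> x - t \<in> vec.span (v ` {1..<j})"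
proof -
  have "x - t \<in> vec.span (v ` {1..<j}) \<longleftrightarrow> x - v j \<in> vec.span (v ` {1..<j})"
  proof
    assume "x - t \<in> vec.span (v ` {1..<j})"
    from vec.span_add[OF this t] show "x - v j \<in> vec.span (v ` {1..<j})"
      by simp
  next
    assume "x - v j \<in> vec.span (v ` {1..<j})"
    from vec.span_diff[OF this t] show "x - t \<in> vec.span (v ` {1..<j})"
      by simp
  qed
  also have "\<dots> \<longleftrightarrow> (\<forall>k\<in>{j..CARD('n)}. cinner (w k) (x - v j) = 0)"
    using j by (intro in_span_right_iff_cinner_left_eq_0) auto
  also have "\<dots> \<longleftrightarrow> cinner (w j) x = cinner (w j) (v j) \<and> (\<forall>k\<in>{j+1..CARD('n)}. cinner (w k) x = 0)"
  proof -
    have "cinner (w k) (v j) = 0" if "k \<in> {j+1..CARD('n)}" for k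
      using cinner_left_right_eq_0[of k j] j that by simp
    moreover have "{j..CARD('n)} = insert j {j+1..CARD('n)}"
      using j by auto
    ultimately show ?thesis
      by (simp add: cinner_diff_right)
  qed
  finally show ?thesis ..
qed

end

section \<open>Linear ordinary differential equations on a compact interval\<close>

lemma continuous_on_matrix_vector_mult [continuous_intros]:
  fixes B :: "real \<Rightarrow> 'a::real_normed_algebra_1^'n^'m"
  assumes "continuous_on S B" "continuous_on S w"
  shows "continuous_on S (\<lambda>t. B t *v w t)"
  unfolding matrix_vector_mult_def by (intro continuous_intros assms)

lemma norm_vector_scalar_mult_le: "norm (c *s (v::complex^'n)) \<le> norm c * norm v"
proof -
  have "norm (c *s v) \<le> norm (norm c *\<^sub>R v)"
    by (rule norm_le_componentwise_cart) (simp add: norm_mult)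
  then show ?thesis
    by simp
qed

lemma bounded_bilinear_vector_scalar_mult: "bounded_bilinear (\<lambda>(c::complex) (v::complex^'n). c *s v)"
proof
  fix a b :: "complex^'n" and c c' :: complex and r :: real
  show "(c + c') *s a = c *s a + c' *s a" "c *s (a + b) = c *s a + c *s b"
    "(r *\<^sub>R c) *s a = r *\<^sub>R (c *s a)" "c *s (r *\<^sub>R a) = r *\<^sub>R (c *s a)"
    by (simp_all add: vec_eq_iff algebra_simps)
  show "\<exists>K. \<forall>a b. norm (a *s (b::complex^'n)) \<le> norm a * norm b * K"
    using norm_vector_scalar_mult_le by (intro exI[of _ 1]) auto
qed

lemma continuous_on_vector_scalar_mult [continuous_intros]:
  fixes g :: "real \<Rightarrow> complex" and U :: "real \<Rightarrow> complex^'n"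
  assumes "continuous_on S g" "continuous_on S U"
  shows "continuous_on S (\<lambda>x. g x *s U x)"
  using bounded_bilinear.continuous_on[OF bounded_bilinear_vector_scalar_mult assms] by simp

lemma norm_matrix_vector_mult_le:
  fixes M :: "complex^'n^'m"
  shows "norm (M *v x) \<le> (\<Sum>i\<in>UNIV. \<Sum>j\<in>UNIV. norm (M $ i $ j)) * norm x"
proof -
  have "norm (M *v x) \<le> (\<Sum>i\<in>UNIV. norm ((M *v x) $ i))"
    by (simp add: norm_vec_def L2_set_le_sum)
  also have "\<dots> \<le> (\<Sum>i\<in>UNIV. \<Sum>j\<in>UNIV. norm (M $ i $ j) * norm x)"
  proof (intro sum_mono)
    fix i
    have "norm ((M *v x) $ i) \<le> (\<Sum>j\<in>UNIV. norm (M $ i $ j * x $ j))"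
      by (simp add: matrix_vector_mult_def norm_sum)
    also have "\<dots> \<le> (\<Sum>j\<in>UNIV. norm (M $ i $ j) * norm x)"
      unfolding norm_mult by (intro sum_mono mult_left_mono Finite_Cartesian_Product.norm_nth_le norm_ge_zero)
    finally show "norm ((M *v x) $ i) \<le> (\<Sum>j\<in>UNIV. norm (M $ i $ j) * norm x)" .
  qed
  finally show ?thesis
    by (simp add: sum_distrib_right)
qed

lemma continuous_matrix_uniformly_bounded:
  fixes B :: "real \<Rightarrow> complex^'n^'m"
  assumes "continuous_on S B" "compact S"
  obtains K where "K > 0" "\<And>t y. t \<in> S \<Longrightarrow> norm (B t *v y) \<le> K * norm y"
proof -
  let ?m = "\<lambda>t. \<Sum>i\<in>UNIV. \<Sum>j\<in>UNIV. norm (B t $ i $ j)"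
  have "continuous_on S ?m"
    by (intro continuous_intros assms)
  then have "bounded (?m ` S)"
    using assms(2) by (intro compact_imp_bounded compact_continuous_image)
  then obtain K where K: "K > 0" "\<And>t. t \<in> S \<Longrightarrow> norm (?m t) \<le> K"
    by (auto simp: bounded_pos)
  have "norm (B t *v y) \<le> K * norm y" if "t \<in> S" for t y
  proof -
    have "norm (B t *v y) \<le> ?m t * norm y"
      by (rule norm_matrix_vector_mult_le)
    also have "\<dots> \<le> K * norm y"
      using K(2)[OF that] by (intro mult_right_mono) auto
    finally show ?thesis .
  qed
  with K(1) show ?thesis
    by (rule that)
qed

text \<open>With \<open>\<beta> = 2K\<close> the weight \<open>exp (\<beta> (L - t))\<close> makes the Picard operator a \<open>1/2\<close>-contraction.\<close>
lemma exp_weighted_integral_le: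
  fixes K d :: real
  assumes "K > 0" "d \<ge> 0" "y \<le> L"
  shows "exp (-(2*K)*(L-y)) * integral {y..L} (\<lambda>t. exp ((2*K)*(L-t)) * (K * d)) \<le> d / 2"
proof -
  define E where "E = exp ((2*K)*(L-y))"
  define e where "e = exp (-(2*K)*(L-y))"
  have "((\<lambda>t. exp ((2*K)*(L-t)) * (K * d)) has_integral
      ((\<lambda>t. - exp ((2*K)*(L-t)) * d / 2) L - (\<lambda>t. - exp ((2*K)*(L-t)) * d / 2) y)) {y..L}"
    using assms
    by (intro fundamental_theorem_of_calculus)
      (auto intro!: derivative_eq_intros simp flip: has_real_derivative_iff_has_vector_derivative)
  also have "(\<lambda>t. - exp ((2*K)*(L-t)) * d / 2) L - (\<lambda>t. - exp ((2*K)*(L-t)) * d / 2) y = (E - 1) * d / 2"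
    by (simp add: E_def field_simps)
  finally have "e * integral {y..L} (\<lambda>t. exp ((2*K)*(L-t)) * (K * d)) = e * ((E - 1) * d / 2)"
    by (simp only: integral_unique)
  also have "\<dots> = (e * E - e) * d / 2"
    by (simp add: algebra_simps)
  also have "e * E = 1"
    by (simp add: e_def E_def flip: exp_add)
  also have "(1 - e) * d / 2 \<le> d / 2"
    using assms(2) by (simp add: e_def algebra_simps)
  finally show ?thesis
    by (simp add: e_def)
qed

lemma has_vector_derivative_if_integral_equation:
  fixes B :: "real \<Rightarrow> complex^'n^'n"
  assumes B: "continuous_on UNIV B" and U: "continuous_on UNIV U"
    and eq: "\<And>x. x \<in> {0..L} \<Longrightarrow> U x = v - integral {x..L} (\<lambda>t. B t *v U t)"
    and x: "x \<in> {0<..<L}"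
  shows "(U has_vector_derivative B x *v U x) (at x)"
proof -
  have "((\<lambda>u. integral {u..L} (\<lambda>t. B t *v U t)) has_vector_derivative - (B x *v U x)) (at x within {0..L})"
    using x by (intro integral_has_vector_derivative' continuous_intros
        continuous_on_subset[OF B] continuous_on_subset[OF U]) auto
  then have "((\<lambda>u. v - integral {u..L} (\<lambda>t. B t *v U t)) has_vector_derivative B x *v U x) (at x within {0..L})"
    using has_vector_derivative_diff[OF has_vector_derivative_const] by fastforce
  then have "(U has_vector_derivative B x *v U x) (at x within {0..L})"
    by (intro has_vector_derivative_transform[OF _ eq]) (use x in auto)
  then have "(U has_vector_derivative B x *v U x) (at x within {0<..<L})"
    by (rule has_vector_derivative_within_subset) auto
  then show ?thesis
    using has_vector_derivative_within_open[OF x open_greaterThanLessThan] by blast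
qed

text \<open>The solution is \<open>U(t) = exp (\<beta> (L - t)) w(t)\<close> for the fixed point \<open>w\<close> of a contraction on
  bounded continuous functions; the rescaling plays the role of a weighted sup norm. Outside
  \<open>[0,L]\<close> the functions are extended constantly by clamping.\<close>
lemma linear_ode_terminal_value_exists:
  fixes B :: "real \<Rightarrow> complex^'n^'n" and v :: "complex^'n"
  assumes B: "continuous_on UNIV B" and "0 < L"
  shows "\<exists>U. continuous_on {0..L} U \<and> (\<forall>x\<in>{0<..<L}. (U has_vector_derivative B x *v U x) (at x)) \<and> U L = v"
proof -
  obtain K where K: "K > 0" "\<And>t y. t \<in> {0..L} \<Longrightarrow> norm (B t *v y) \<le> K * norm y"
    using continuous_matrix_uniformly_bounded[OF continuous_on_subset[OF B]] by blast
  define \<beta> where "\<beta> = 2*K"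
  define G where "G w t = exp (\<beta>*(L-t)) *\<^sub>R (B t *v apply_bcontfun w t)"
    for w :: "real \<Rightarrow>\<^sub>C (complex^'n)" and t
  define F where "F w x = exp (-\<beta>*(L-x)) *\<^sub>R (v - integral {x..L} (G w))" for w x
  have G_cont: "continuous_on UNIV (G w)" for w
    unfolding G_def by (intro continuous_intros B) auto
  have "continuous_on {0..L} (F w)" for w
    unfolding F_def
    by (intro continuous_intros indefinite_integral_continuous_1' integrable_continuous_real
        continuous_on_subset[OF G_cont]) auto
  then have "\<exists>g. \<forall>x. apply_bcontfun g x = F w (clamp 0 L x)" for w
    using continuous_on_cbox_bcontfunE[of 0 L "F w"] by (metis cbox_interval)
  then obtain T where T: "\<And>w x. apply_bcontfun (T w) x = F w (clamp 0 L x)"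
    by metis
  have "dist (T w1) (T w2) \<le> 1/2 * dist w1 w2" for w1 w2
  proof (rule dist_bound)
    fix x
    define y where "y = clamp 0 L x"
    have y: "0 \<le> y" "y \<le> L"
      using clamp_in_interval[of 0 L x] \<open>0 < L\<close> by (auto simp: y_def cbox_interval)
    have G_diff: "G w2 t - G w1 t = exp (\<beta>*(L-t)) *\<^sub>R (B t *v (w2 t - w1 t))" for t
      by (simp add: G_def matrix_vector_mult_diff_distrib scaleR_diff_right)
    have "norm (integral {y..L} (\<lambda>t. G w2 t - G w1 t))
        \<le> integral {y..L} (\<lambda>t. exp (\<beta>*(L-t)) * (K * dist w1 w2))"
    proof (rule integral_norm_bound_integral)
      fix t assume t: "t \<in> {y..L}"
      have "norm (B t *v (w2 t - w1 t)) \<le> K * dist w1 w2"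
        using K(2)[of t "w2 t - w1 t"] t y dist_bounded[of w1 t w2] K(1)
        by (smt (verit) atLeastAtMost_iff dist_commute dist_norm mult_left_mono)
      then show "norm (G w2 t - G w1 t) \<le> exp (\<beta>*(L-t)) * (K * dist w1 w2)"
        by (simp add: G_diff)
    qed (auto intro!: integrable_continuous_real continuous_intros continuous_on_subset[OF G_cont])
    then have "dist (F w1 y) (F w2 y) \<le> exp (-\<beta>*(L-y)) * integral {y..L} (\<lambda>t. exp (\<beta>*(L-t)) * (K * dist w1 w2))"
      unfolding F_def dist_norm
      by (simp add: integral_diff integrable_continuous_real continuous_on_subset[OF G_cont]
          flip: scaleR_diff_right)
    also have "\<dots> \<le> dist w1 w2 / 2"
      using exp_weighted_integral_le[OF K(1) zero_le_dist y(2)] by (simp add: \<beta>_def)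
    finally show "dist (T w1 x) (T w2 x) \<le> 1/2 * dist w1 w2"
      by (simp add: T y_def)
  qed
  then obtain w where w: "T w = w"
    using banach_fix_type[of "1/2" T] by auto
  define U where "U x = exp (\<beta>*(L-x)) *\<^sub>R apply_bcontfun w x" for x
  have U_cont: "continuous_on UNIV U"
    unfolding U_def by (intro continuous_intros) auto
  have U_eq: "U x = v - integral {x..L} (\<lambda>t. B t *v U t)" if "x \<in> {0..L}" for x
  proof -
    have "apply_bcontfun w x = F w x"
      using T[of w x] w that by (simp add: cbox_interval)
    moreover have "G w = (\<lambda>t. B t *v U t)"
      by (simp add: G_def U_def fun_eq_iff real_vector.linear_scale[OF matrix_vector_mul_linear])
    ultimately show ?thesis
      by (simp add: U_def F_def flip: exp_add)
  qed
  show ?thesis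
    using U_eq[of L] \<open>0 < L\<close> continuous_on_subset[OF U_cont]
      has_vector_derivative_if_integral_equation[OF B U_cont U_eq]
    by (intro exI[of _ U]) auto
qed

text \<open>\<open>exp (-c t) f\<close> decreases and \<open>exp (c t) f\<close> increases.\<close>
lemma nonneg_eq_0_if_deriv_bounded:
  fixes f f' :: "real \<Rightarrow> real"
  assumes cont: "continuous_on {a..b} f"
    and deriv: "\<And>t. t \<in> {a<..<b} \<Longrightarrow> (f has_real_derivative f' t) (at t)"
    and bound: "\<And>t. t \<in> {a<..<b} \<Longrightarrow> \<bar>f' t\<bar> \<le> c * f t"
    and nonneg: "\<And>t. t \<in> {a..b} \<Longrightarrow> 0 \<le> f t"
    and x0: "x0 \<in> {a..b}" "f x0 = 0" and x: "x \<in> {a..b}"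
  shows "f x = 0"
proof -
  have weighted_deriv: "((\<lambda>t. exp (s*t) * f t) has_real_derivative exp (s*t) * (f' t + s * f t)) (at t)"
    if "t \<in> {a<..<b}" for s t
  proof -
    have "((\<lambda>t. exp (s*t)) has_real_derivative exp (s*t) * s) (at t)"
      by (auto intro!: derivative_eq_intros)
    from DERIV_mult[OF this deriv[OF that]] show ?thesis
      by (simp add: algebra_simps)
  qed
  have weighted_cont: "continuous_on {u..u'} (\<lambda>t. exp (s*t) * f t)" if "{u..u'} \<subseteq> {a..b}" for s u u'
    using that by (intro continuous_intros continuous_on_subset[OF cont])
  show ?thesis
  proof (cases "x0 \<le> x")
    case True
    have "exp (-c*x) * f x \<le> exp (-c*x0) * f x0"
    proof (rule DERIV_nonpos_imp_decreasing_open[OF True])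
      fix t assume "x0 < t" "t < x"
      then have t: "t \<in> {a<..<b}"
        using x0 x by auto
      have "f' t + -c * f t \<le> 0"
        using bound[OF t] by linarith
      then show "\<exists>y. ((\<lambda>t. exp (-c*t) * f t) has_real_derivative y) (at t) \<and> y \<le> 0"
        using weighted_deriv[OF t, of "-c"]
        by (intro exI[of _ "exp (-c*t) * (f' t + -c * f t)"]) (simp add: mult_nonneg_nonpos)
    qed (use weighted_cont[of x0 x "-c"] x0 x in auto)
    then show ?thesis
      using x0 nonneg[OF x] by (simp add: mult_le_0_iff)
  next
    case False
    have "exp (c*x) * f x \<le> exp (c*x0) * f x0"
    proof (rule DERIV_nonneg_imp_increasing_open[of x x0])
      fix t assume "x < t" "t < x0"
      then have t: "t \<in> {a<..<b}"
        using x0 x by auto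
      have "0 \<le> f' t + c * f t"
        using bound[OF t] by linarith
      then show "\<exists>y. ((\<lambda>t. exp (c*t) * f t) has_real_derivative y) (at t) \<and> 0 \<le> y"
        using weighted_deriv[OF t, of c] by auto
    qed (use False weighted_cont[of x x0 c] x0 x in auto)
    then show ?thesis
      using x0 nonneg[OF x] by (simp add: mult_le_0_iff)
  qed
qed

lemma linear_ode_eq_0:
  fixes B :: "real \<Rightarrow> complex^'n^'n" and U :: "real \<Rightarrow> complex^'n"
  assumes B: "continuous_on UNIV B"
    and U_cont: "continuous_on {0..L} U"
    and U_deriv: "\<And>x. x \<in> {0<..<L} \<Longrightarrow> (U has_vector_derivative B x *v U x) (at x)"
    and "x0 \<in> {0..L}" "U x0 = 0" "x \<in> {0..L}"
  shows "U x = 0"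
proof -
  obtain K where K: "K > 0" "\<And>t y. t \<in> {0..L} \<Longrightarrow> norm (B t *v y) \<le> K * norm y"
    using continuous_matrix_uniformly_bounded[OF continuous_on_subset[OF B]] by blast
  have "U x \<bullet> U x = 0"
  proof (rule nonneg_eq_0_if_deriv_bounded[where f = "\<lambda>t. U t \<bullet> U t"
      and f' = "\<lambda>t. 2 * (U t \<bullet> (B t *v U t))" and c = "2*K"])
    fix t assume t: "t \<in> {0<..<L}"
    have "((\<lambda>t. U t \<bullet> U t) has_derivative (\<lambda>h. U t \<bullet> (h *\<^sub>R (B t *v U t)) + (h *\<^sub>R (B t *v U t)) \<bullet> U t)) (at t)"
      using U_deriv[OF t] by (intro has_derivative_inner) (simp_all add: has_vector_derivative_def)
    then show "((\<lambda>t. U t \<bullet> U t) has_real_derivative 2 * (U t \<bullet> (B t *v U t))) (at t)"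
      unfolding has_field_derivative_def
      by (rule has_derivative_eq_rhs) (auto simp: fun_eq_iff inner_commute)
    have "\<bar>U t \<bullet> (B t *v U t)\<bar> \<le> norm (U t) * norm (B t *v U t)"
      by (rule Cauchy_Schwarz_ineq2)
    also have "\<dots> \<le> norm (U t) * (K * norm (U t))"
      using K(2) t by (intro mult_left_mono) auto
    also have "\<dots> = K * (U t \<bullet> U t)"
      by (simp add: dot_square_norm power2_eq_square)
    finally show "\<bar>2 * (U t \<bullet> (B t *v U t))\<bar> \<le> 2*K * (U t \<bullet> U t)"
      by simp
  qed (use assms in \<open>auto intro: continuous_intros\<close>)
  then show ?thesis
    by simp
qed

lemma has_vector_derivative_exp_scale:
  fixes U :: "real \<Rightarrow> complex^'n"
  assumes "(U has_vector_derivative D) (at x)"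
  shows "((\<lambda>x. exp (a * (of_real x - of_real L)) *s U x) has_vector_derivative
     exp (a * (of_real x - of_real L)) *s D + a *s (exp (a * (of_real x - of_real L)) *s U x)) (at x)"
proof -
  have "((\<lambda>x. exp (a * (of_real x - of_real L))) has_vector_derivative a * exp (a * (of_real x - of_real L))) (at x)"
    by (rule has_vector_derivative_real_field[where f = "\<lambda>z. exp (a * (z - of_real L))", simplified])
      (auto intro!: derivative_eq_intros)
  from bounded_bilinear.has_vector_derivative[OF bounded_bilinear_vector_scalar_mult this assms] show ?thesis
    by (simp add: vector_smult_assoc mult.commute)
qed

section \<open>Solutions determined by their terminal value\<close>

locale linear_ode =
  fixes B :: "real \<Rightarrow> complex^'n^'n" and L :: real
  assumes B_cont: "continuous_on UNIV B" and L_pos: "0 < L"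
begin

definition ode_sol :: "(real \<Rightarrow> complex^'n) \<Rightarrow> bool" where
  "ode_sol U \<longleftrightarrow> continuous_on {0..L} U \<and> (\<forall>x\<in>{0<..<L}. (U has_vector_derivative B x *v U x) (at x))"

definition shifted_sol :: "complex \<Rightarrow> (real \<Rightarrow> complex^'n) \<Rightarrow> bool" where
  "shifted_sol \<mu> V \<longleftrightarrow> continuous_on {0..L} V \<and>
     (\<forall>x\<in>{0<..<L}. (V has_vector_derivative B x *v V x - \<mu> *s V x) (at x))"

lemma ode_sol_add: "ode_sol U1 \<Longrightarrow> ode_sol U2 \<Longrightarrow> ode_sol (\<lambda>x. U1 x + U2 x)"
  unfolding ode_sol_def
  by (auto intro!: continuous_intros has_vector_derivative_add simp: matrix_vector_right_distrib)

lemma ode_sol_scale: "ode_sol U \<Longrightarrow> ode_sol (\<lambda>x. c *s U x)"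
  unfolding ode_sol_def
  using bounded_linear.has_vector_derivative[OF bounded_bilinear.bounded_linear_right[OF
      bounded_bilinear_vector_scalar_mult, of c]]
  by (auto intro!: continuous_intros simp: vector_scalar_commute)

lemma ode_sol_diff: "ode_sol U1 \<Longrightarrow> ode_sol U2 \<Longrightarrow> ode_sol (\<lambda>x. U1 x - U2 x)"
  unfolding ode_sol_def
  by (auto intro!: continuous_intros has_vector_derivative_diff simp: matrix_vector_mult_diff_distrib)

lemma ode_sol_eq_0: "ode_sol U \<Longrightarrow> x0 \<in> {0..L} \<Longrightarrow> U x0 = 0 \<Longrightarrow> x \<in> {0..L} \<Longrightarrow> U x = 0"
  unfolding ode_sol_def using linear_ode_eq_0[OF B_cont] by blast

lemma ode_sol_iff_shifted_sol:
  "ode_sol (\<lambda>x. exp (\<mu> * (of_real x - of_real L)) *s V x) \<longleftrightarrow> shifted_sol \<mu> V"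
proof -
  let ?e = "\<lambda>x. exp (\<mu> * (of_real x - of_real L))"
  have cont_iff: "continuous_on {0..L} (\<lambda>x. ?e x *s V x) \<longleftrightarrow> continuous_on {0..L} V"
  proof
    assume "continuous_on {0..L} (\<lambda>x. ?e x *s V x)"
    then have "continuous_on {0..L} (\<lambda>x. (1 / ?e x) *s (?e x *s V x))"
      by (rule continuous_on_vector_scalar_mult[rotated]) (auto intro!: continuous_intros)
    then show "continuous_on {0..L} V"
      by (simp add: vector_smult_assoc exp_not_eq_zero)
  qed (intro continuous_intros)
  have deriv_iff: "(V has_vector_derivative B x *v V x - \<mu> *s V x) (at x) \<longleftrightarrow>
      ((\<lambda>x. ?e x *s V x) has_vector_derivative B x *v (?e x *s V x)) (at x)" for x
  proof
    assume "(V has_vector_derivative B x *v V x - \<mu> *s V x) (at x)"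
    from has_vector_derivative_exp_scale[OF this, of \<mu> L]
    show "((\<lambda>x. ?e x *s V x) has_vector_derivative B x *v (?e x *s V x)) (at x)"
      by (simp add: vector_scalar_commute vector_ssub_ldistrib vector_smult_assoc mult.commute)
  next
    assume "((\<lambda>x. ?e x *s V x) has_vector_derivative B x *v (?e x *s V x)) (at x)"
    from has_vector_derivative_exp_scale[OF this, of "-\<mu>" L]
    show "(V has_vector_derivative B x *v V x - \<mu> *s V x) (at x)"
      by (simp add: vector_scalar_commute vector_smult_assoc vector_sub_rdistrib algebra_simps
          flip: exp_add)
  qed
  show ?thesis
    unfolding ode_sol_def shifted_sol_def cont_iff deriv_iff ..
qed

definition terminal_sol :: "complex^'n \<Rightarrow> real \<Rightarrow> complex^'n" where
  "terminal_sol v = (SOME U. ode_sol U \<and> U L = v)"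

lemma terminal_sol: "ode_sol (terminal_sol v)" "terminal_sol v L = v"
  using someI_ex[OF linear_ode_terminal_value_exists[OF B_cont L_pos, of v]]
  unfolding terminal_sol_def ode_sol_def by auto

lemma terminal_sol_eq:
  assumes "ode_sol U" "x \<in> {0..L}"
  shows "terminal_sol (U L) x = U x"
proof -
  have "terminal_sol (U L) x - U x = 0"
    by (rule ode_sol_eq_0[of "\<lambda>x. terminal_sol (U L) x - U x" L])
      (use ode_sol_diff[OF terminal_sol(1) assms(1)] assms(2) L_pos in \<open>auto simp: terminal_sol\<close>)
  then show ?thesis
    by simp
qed

definition propagator :: "complex^'n \<Rightarrow> complex^'n" where
  "propagator v = terminal_sol v 0"

lemma linear_propagator: "Vector_Spaces.linear (*s) (*s) propagator"
  unfolding Vector_Spaces.linear_iff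
proof (intro conjI allI vec.vector_space_axioms)
  fix x y :: "complex^'n" and c :: complex
  have "terminal_sol (terminal_sol x L + terminal_sol y L) 0 = terminal_sol x 0 + terminal_sol y 0"
    using terminal_sol_eq[OF ode_sol_add[OF terminal_sol(1) terminal_sol(1)], of 0] L_pos by simp
  then show "propagator (x + y) = propagator x + propagator y"
    by (simp add: propagator_def terminal_sol)
  have "terminal_sol (c *s terminal_sol x L) 0 = c *s terminal_sol x 0"
    using terminal_sol_eq[OF ode_sol_scale[OF terminal_sol(1)], of 0] L_pos by simp
  then show "propagator (c *s x) = c *s propagator x"
    by (simp add: propagator_def terminal_sol)
qed

definition terminal_value :: "(nat \<Rightarrow> complex^'n) \<Rightarrow> nat \<Rightarrow> complex^'n" where
  "terminal_value v j = (SOME t. t - v j \<in> vec.span (v ` {1..<j}) \<and>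
     (\<forall>e\<in>vec.span (v ` {1..<j}). cinner (propagator e) (propagator t) = 0))"

lemma terminal_value:
  "terminal_value v j - v j \<in> vec.span (v ` {1..<j})"
  "e \<in> vec.span (v ` {1..<j}) \<Longrightarrow> cinner (propagator e) (propagator (terminal_value v j)) = 0"
  using someI_ex[OF cinner_linear_correction_exists[OF linear_propagator, of "v j" "v ` {1..<j}"]]
  unfolding terminal_value_def by auto

lemma span_terminal_value: "vec.span (v ` {1..<j}) = vec.span (terminal_value v ` {1..<j})"
  by (rule span_eq_if_triangular) (rule terminal_value(1))

definition bvp_solution :: "(nat \<Rightarrow> complex) \<Rightarrow> (nat \<Rightarrow> complex^'n) \<Rightarrow> nat \<Rightarrow> real \<Rightarrow> complex^'n" where
  "bvp_solution \<mu> v j x = exp (- \<mu> j * (of_real x - of_real L)) *s terminal_sol (terminal_value v j) x"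

lemma shifted_sol_bvp_solution: "shifted_sol (\<mu> j) (bvp_solution \<mu> v j)"
  using terminal_sol(1)
  by (simp add: bvp_solution_def flip: ode_sol_iff_shifted_sol[of "\<mu> j"] add: vector_smult_assoc
      flip: exp_add)

lemma bvp_solution_at_L: "bvp_solution \<mu> v j L = terminal_value v j"
  by (simp add: bvp_solution_def terminal_sol)

lemma bvp_solution_at_0: "bvp_solution \<mu> v j 0 = exp (\<mu> j * of_real L) *s propagator (terminal_value v j)"
  by (simp add: bvp_solution_def propagator_def)

lemma cinner_bvp_solution_at_0:
  assumes "k \<in> {1..<j}"
  shows "cinner (bvp_solution \<mu> v k 0) (bvp_solution \<mu> v j 0) = 0"
proof -
  have "terminal_value v k \<in> vec.span (v ` {1..<j})"
    unfolding span_terminal_value[of v j] using assms by (intro vec.span_base) auto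
  then show ?thesis
    by (simp add: bvp_solution_at_0 cinner_scale_left cinner_scale_right terminal_value(2))
qed

lemma bvp_solution_unique:
  assumes V: "shifted_sol (\<mu> j) V"
    and V0: "\<And>k. k \<in> {1..<j} \<Longrightarrow> cinner (bvp_solution \<mu> v k 0) (V 0) = 0"
    and VL: "V L - terminal_value v j \<in> vec.span (v ` {1..<j})"
    and x: "x \<in> {0..L}"
  shows "V x = bvp_solution \<mu> v j x"
proof -
  interpret P: Vector_Spaces.linear "(*s)" "(*s)" propagator
    by (fact linear_propagator)
  define D where "D x = exp (\<mu> j * (of_real x - of_real L)) *s (V x - bvp_solution \<mu> v j x)" for x
  have "ode_sol (\<lambda>x. exp (\<mu> j * (of_real x - of_real L)) *s V x)"
    using V by (simp add: ode_sol_iff_shifted_sol)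
  moreover have "ode_sol (\<lambda>x. exp (\<mu> j * (of_real x - of_real L)) *s bvp_solution \<mu> v j x)"
    using shifted_sol_bvp_solution by (simp add: ode_sol_iff_shifted_sol)
  ultimately have D: "ode_sol D"
    unfolding D_def vector_ssub_ldistrib by (rule ode_sol_diff)
  have "D 0 = propagator (D L)"
    using terminal_sol_eq[OF D, of 0] L_pos by (simp add: propagator_def)
  moreover have "D L \<in> vec.span (terminal_value v ` {1..<j})"
    using VL unfolding span_terminal_value[of v j] by (simp add: D_def bvp_solution_at_L)
  ultimately have "D 0 \<in> vec.span (propagator ` terminal_value v ` {1..<j})"
    unfolding P.span_image by simp
  moreover have "cinner (propagator (terminal_value v k)) (D 0) = 0" if "k \<in> {1..<j}" for k
    using V0[OF that] cinner_bvp_solution_at_0[OF that, of \<mu> v]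
    by (simp add: D_def bvp_solution_at_0 cinner_scale_left cinner_scale_right cinner_diff_right)
  ultimately have "cinner (D 0) (D 0) = 0"
    using cinner_span_left_eq_0[of "propagator ` terminal_value v ` {1..<j}" "D 0" "D 0"] by blast
  then have "D x = 0"
    using ode_sol_eq_0[OF D _ _ x, of 0] L_pos by (simp add: cinner_self_eq_0)
  then show ?thesis
    by (simp add: D_def)
qed

end

section \<open>The boundary-value problems\<close>

lemma bvp_sol_exists_unique:
  fixes A :: "real \<Rightarrow> complex \<Rightarrow> complex^'n^'n" and M :: "complex^'n^'n"
    and nu :: "nat \<Rightarrow> complex \<Rightarrow> complex" and Vp Wp :: "nat \<Rightarrow> complex \<Rightarrow> complex^'n"
  assumes A: "continuous_on UNIV (\<lambda>t. A t lam)" and L: "0 < L" and r: "r \<le> CARD('n)"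
    and eig: "eigenpairs M (\<lambda>k. nu k lam) (\<lambda>k. Vp k lam) (\<lambda>k. Wp k lam)"
  shows "\<exists>Vs. \<forall>j\<in>{1..r}. bvp_sol A nu Vp Wp lam L j Vs (Vs j) \<and>
    (\<forall>V. bvp_sol A nu Vp Wp lam L j Vs V \<longrightarrow> (\<forall>x\<in>{0..L}. V x = Vs j x))"
proof -
  interpret linear_ode "\<lambda>t. A t lam" L
    using A L by unfold_locales
  interpret eigenpairs M "\<lambda>k. nu k lam" "\<lambda>k. Vp k lam" "\<lambda>k. Wp k lam"
    by (fact eig)
  let ?Vs = "bvp_solution (\<lambda>k. nu k lam) (\<lambda>k. Vp k lam)"
  have bvp_sol_iff: "bvp_sol A nu Vp Wp lam L j ?Vs V \<longleftrightarrow> shifted_sol (nu j lam) V \<and>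
      (\<forall>k\<in>{1..<j}. cinner (?Vs k 0) (V 0) = 0) \<and>
      V L - terminal_value (\<lambda>k. Vp k lam) j \<in> vec.span ((\<lambda>k. Vp k lam) ` {1..<j})"
    if "j \<in> {1..r}" for j V
    using terminal_conditions_iff[OF _ terminal_value(1), of j "V L"] that r
    by (auto simp: bvp_sol_def shifted_sol_def)
  show ?thesis
  proof (intro exI[of _ ?Vs] ballI conjI allI impI)
    fix j assume j: "j \<in> {1..r}"
    show "bvp_sol A nu Vp Wp lam L j ?Vs (?Vs j)"
      unfolding bvp_sol_iff[OF j]
      using shifted_sol_bvp_solution cinner_bvp_solution_at_0 by (simp add: bvp_solution_at_L vec.span_zero)
    fix V x assume "bvp_sol A nu Vp Wp lam L j ?Vs V" "x \<in> {0..L}"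
    then show "V x = ?Vs j x"
      unfolding bvp_sol_iff[OF j]
      using bvp_solution_unique[where \<mu> = "\<lambda>k. nu k lam" and v = "\<lambda>k. Vp k lam"] by blast
  qed
qed

theorem lemma2:
  fixes A :: "real \<Rightarrow> complex \<Rightarrow> complex^'n^'n"
    and Ap Am :: "complex \<Rightarrow> complex^'n^'n"
    and \<Omega> :: "complex set"
    and r :: nat
    and nu :: "nat \<Rightarrow> complex \<Rightarrow> complex"
    and Vp Wp :: "nat \<Rightarrow> complex \<Rightarrow> complex^'n"
  assumes \<Omega>: "open \<Omega>" "bounded \<Omega>" "simply_connected \<Omega>"
    and A_cont: "continuous_on (UNIV \<times> closure \<Omega>) (\<lambda>(x, lam). A x lam)"
    and Ap_cont: "continuous_on (closure \<Omega>) Ap"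
    and Am_cont: "continuous_on (closure \<Omega>) Am"
    and A_hol: "\<And>x i k. (\<lambda>lam. A x lam $ i $ k) holomorphic_on \<Omega>"
    and Ap_hol: "\<And>i k. (\<lambda>lam. Ap lam $ i $ k) holomorphic_on \<Omega>"
    and Am_hol: "\<And>i k. (\<lambda>lam. Am lam $ i $ k) holomorphic_on \<Omega>"
    and A_exp: "\<exists>K \<alpha>. K > 0 \<and> \<alpha> > 0 \<and>
        (\<forall>x\<ge>0. \<forall>lam\<in>closure \<Omega>. norm (A x lam - Ap lam) \<le> K * exp (-\<alpha> * x)) \<and>
        (\<forall>x\<le>0. \<forall>lam\<in>closure \<Omega>. norm (A x lam - Am lam) \<le> K * exp (\<alpha> * x))"
    and Am_spec: "\<And>lam. lam \<in> closure \<Omega> \<Longrightarrow> \<exists>mu :: nat \<Rightarrow> complex.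
        inj_on mu {1..CARD('n)} \<and>
        (\<forall>j\<in>{1..CARD('n)}. (\<exists>v. v \<noteq> 0 \<and> Am lam *v v = mu j *s v) \<and> Re (mu j) \<noteq> 0) \<and>
        card {j\<in>{1..CARD('n)}. Re (mu j) < 0} = r"
    and nu_cont: "\<And>j. j \<in> {1..CARD('n)} \<Longrightarrow> continuous_on (closure \<Omega>) (nu j)"
    and Vp_cont: "\<And>j. j \<in> {1..CARD('n)} \<Longrightarrow> continuous_on (closure \<Omega>) (Vp j)"
    and Wp_cont: "\<And>j. j \<in> {1..CARD('n)} \<Longrightarrow> continuous_on (closure \<Omega>) (Wp j)"
    and nu_inj: "\<And>lam. lam \<in> closure \<Omega> \<Longrightarrow> inj_on (\<lambda>j. nu j lam) {1..CARD('n)}"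
    and nu_hyp: "\<And>lam j. lam \<in> closure \<Omega> \<Longrightarrow> j \<in> {1..CARD('n)} \<Longrightarrow> Re (nu j lam) \<noteq> 0"
    and nu_ord: "\<And>lam j. lam \<in> closure \<Omega> \<Longrightarrow> 1 \<le> j \<Longrightarrow> j < CARD('n) \<Longrightarrow>
        Re (nu j lam) \<le> Re (nu (j+1) lam)"
    and nu_stable: "\<And>lam j. lam \<in> closure \<Omega> \<Longrightarrow> j \<in> {1..CARD('n)} \<Longrightarrow>
        (Re (nu j lam) < 0 \<longleftrightarrow> j \<le> r)"
    and Vp_eig: "\<And>lam j. lam \<in> closure \<Omega> \<Longrightarrow> j \<in> {1..CARD('n)} \<Longrightarrow>
        Vp j lam \<noteq> 0 \<and> Ap lam *v Vp j lam = nu j lam *s Vp j lam"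
    and Wp_eig: "\<And>lam j. lam \<in> closure \<Omega> \<Longrightarrow> j \<in> {1..CARD('n)} \<Longrightarrow>
        Wp j lam \<noteq> 0 \<and> cadj (Ap lam) *v Wp j lam = cnj (nu j lam) *s Wp j lam"
    and r_le: "r \<le> CARD('n)"
  shows "\<exists>(\<eta>::real) (C::real) (L0::real). \<eta> > 0 \<and> C > 0 \<and> L0 > 0 \<and>
    (\<forall>L\<ge>L0. \<forall>lam\<in>closure \<Omega>. \<exists>Vs :: nat \<Rightarrow> real \<Rightarrow> complex^'n.
       \<forall>j\<in>{1..r}. bvp_sol A nu Vp Wp lam L j Vs (Vs j) \<and>
         (\<forall>V. bvp_sol A nu Vp Wp lam L j Vs V \<longrightarrow> (\<forall>x\<in>{0..L}. V x = Vs j x)))"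
proof -
  have "\<exists>Vs. \<forall>j\<in>{1..r}. bvp_sol A nu Vp Wp lam L j Vs (Vs j) \<and>
      (\<forall>V. bvp_sol A nu Vp Wp lam L j Vs V \<longrightarrow> (\<forall>x\<in>{0..L}. V x = Vs j x))"
    if L: "L \<ge> 1" and lam: "lam \<in> closure \<Omega>" for L lam
  proof (rule bvp_sol_exists_unique[OF _ _ r_le])
    show "continuous_on UNIV (\<lambda>t. A t lam)"
      using lam by (intro continuous_on_compose2[OF A_cont, where f = "\<lambda>t. (t, lam)", simplified])
        (auto intro!: continuous_intros)
    show "eigenpairs (Ap lam) (\<lambda>k. nu k lam) (\<lambda>k. Vp k lam) (\<lambda>k. Wp k lam)"
      using nu_inj Vp_eig Wp_eig lam by unfold_locales auto
  qed (use L in auto)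
  then show ?thesis
    by (intro exI[of _ 1]) auto
qed

end
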